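(* For every integer $k\ge 6$, there exist aperiodic recurrent infinite words avoiding $(k,k-5)$-anti-powers.
   Context: A word avoids a class of words if no factor (contiguous subword) belongs to the class. A $(k,\lambda)$-anti-power is a word $w=w_1\cdots w_k$ with $|w_1|=\cdots=|w_k|\ge1$ such that $|\{i: w_i=w_j\}|\le\lambda$ for each $j\in\{1,\dots,k\}$. An infinite word is recurrent if every finite factor occurs infinitely often. An infinite word $x$ is eventually periodic if some suffix of $x$ equals $u^\omega$ for a finite word $u$; otherwise it is aperiodic. *)

theory Defs
  imports Main
begin

definition factor_at :: "(nat \<Rightarrow> 'a) \<Rightarrow> nat \<Rightarrow> nat \<Rightarrow> 'a list" where
  "factor_at x i n = map x [i..<i+n]"

definition is_factor :: "'a list \<Rightarrow> (nat \<Rightarrow> 'a) \<Rightarrow> bool" where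
  "is_factor w x \<longleftrightarrow> (\<exists>i. factor_at x i (length w) = w)"

definition anti_power :: "nat \<Rightarrow> nat \<Rightarrow> 'a list \<Rightarrow> bool" where
  "anti_power k lam w \<longleftrightarrow>
     (\<exists>ws :: 'a list list. length ws = k \<and> concat ws = w \<and>
        (\<exists>m\<ge>1. \<forall>b\<in>set ws. length b = m) \<and>
        (\<forall>j<k. card {i. i < k \<and> ws ! i = ws ! j} \<le> lam))"

definition avoids_anti_powers :: "nat \<Rightarrow> nat \<Rightarrow> (nat \<Rightarrow> 'a) \<Rightarrow> bool" where
  "avoids_anti_powers k lam x \<longleftrightarrow> (\<forall>w. is_factor w x \<longrightarrow> \<not> anti_power k lam w)"

definition recurrent :: "(nat \<Rightarrow> 'a) \<Rightarrow> bool" where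
  "recurrent x \<longleftrightarrow>
     (\<forall>w. is_factor w x \<longrightarrow> infinite {j. factor_at x j (length w) = w})"

definition eventually_periodic :: "(nat \<Rightarrow> 'a) \<Rightarrow> bool" where
  "eventually_periodic x \<longleftrightarrow>
     (\<exists>N u. u \<noteq> [] \<and> (\<forall>n. x (N + n) = u ! (n mod length u)))"

definition aperiodic :: "(nat \<Rightarrow> 'a) \<Rightarrow> bool" where
  "aperiodic x \<longleftrightarrow> \<not> eventually_periodic x"

end

theory Submission
  imports Defs "HOL-Library.Infinite_Set"
begin

text \<open>Take x n = 1 exactly when all base-B digits of n are 0 or 1, where B = 2k + 2.
  The prefix of length B^t reappears at position B^t, so x is recurrent. There are no ones between
  2 B^t and B^(t+1); for large t, adding a suitable multiple of a period L to the 1 at B^t would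
  land there, so x is aperiodic.
  Cut a factor into k blocks of length m and pick e with 2 B^e \<le> m + 1 < 2 B^(e+1). The ones of the
  factor have quotients by B^(e+1) that again have 0/1 digits and differ by at most 2k < B - 1,
  so only two quotients occur; each quotient pins its ones into an interval of 2 B^e \<le> m + 1
  positions, which meets at most two blocks. Hence at least k - 4 blocks are all zero, and these
  equal blocks rule out a (k, k - 5)-anti-power.\<close>

lemma nth_concat_equal_length:
  assumes "\<forall>b\<in>set ws. length b = m" "concat ws = factor_at x i (length ws * m)" "j < length ws"
  shows "ws ! j = factor_at x (i + j * m) m"
  using assms
proof (induction ws arbitrary: i j)
  case Nil
  then show ?case by simp
next
  case (Cons b ws)
  have "[i..<i + length (b # ws) * m] = [i..<i + m] @ [i + m..<i + m + length ws * m]"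
    by (metis add.assoc le_add1 mult_Suc length_Cons upt_add_eq_append)
  then have "b @ concat ws = factor_at x i m @ factor_at x (i + m) (length ws * m)"
    using Cons.prems(2) by (simp add: factor_at_def)
  moreover have "length b = m" using Cons.prems(1) by simp
  ultimately have "b = factor_at x i m" and "concat ws = factor_at x (i + m) (length ws * m)"
    by (simp_all add: append_eq_append_conv factor_at_def)
  then show ?case
    using Cons.IH[of "i + m" "j - 1"] Cons.prems by (cases j) (simp_all add: algebra_simps)
qed

lemma factor_at_eq_replicate_iff:
  "factor_at x i n = replicate n c \<longleftrightarrow> (\<forall>p\<in>{i..<i + n}. x p = c)"
proof -
  have "replicate n c = map (\<lambda>_. c) [i..<i + n]"
    by (simp add: map_replicate_const)
  then show ?thesis
    unfolding factor_at_def by (simp only: map_eq_conv set_upt)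
qed

lemma avoids_anti_powersI:
  assumes few_blocks:
      "\<And>i m. 1 \<le> m \<Longrightarrow> card {j. j < k \<and> factor_at x (i + j * m) m \<noteq> replicate m c} \<le> r"
    and "r + lam < k"
  shows "avoids_anti_powers k lam x"
  unfolding avoids_anti_powers_def is_factor_def
proof (intro allI impI notI, elim exE)
  fix w i
  assume w: "factor_at x i (length w) = w" and "anti_power k lam w"
  then obtain ws m where ws: "length ws = k" "concat ws = w" "1 \<le> m" "\<forall>b\<in>set ws. length b = m"
      and rare: "\<forall>j<k. card {i. i < k \<and> ws ! i = ws ! j} \<le> lam"
    unfolding anti_power_def by blast
  have "length (concat ws) = length ws * m"
    using ws(4) by (induction ws) auto
  then have "length w = k * m"
    using ws(1,2) by simp
  then have blocks: "ws ! j = factor_at x (i + j * m) m" if "j < k" for j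
    using nth_concat_equal_length[OF ws(4)] ws(1,2) w that by simp
  define E where "E = {j. j < k \<and> ws ! j = replicate m c}"
  have "{..<k} - E = {j. j < k \<and> factor_at x (i + j * m) m \<noteq> replicate m c}"
    using blocks unfolding E_def by auto
  then have "card ({..<k} - E) \<le> r"
    using few_blocks[OF ws(3)] by simp
  moreover have "card ({..<k} - E) = k - card E"
    by (subst card_Diff_subset) (auto simp: E_def)
  ultimately have "lam < card E"
    using assms(2) by linarith
  then obtain j0 where "j0 \<in> E"
    by (metis card.empty ex_in_conv not_less0)
  then have "{i. i < k \<and> ws ! i = ws ! j0} = E"
    unfolding E_def by auto
  then show False
    using rare \<open>j0 \<in> E\<close> \<open>lam < card E\<close> unfolding E_def by fastforce
qed

lemma recurrentI:
  assumes "\<And>M. \<exists>s\<ge>M. \<forall>p<M. x (s + p) = x p"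
  shows "recurrent x"
  unfolding recurrent_def is_factor_def
proof (intro allI impI, elim exE)
  fix w i
  assume w: "factor_at x i (length w) = w"
  show "infinite {j. factor_at x j (length w) = w}"
    unfolding infinite_nat_iff_unbounded_le
  proof
    fix M
    obtain s where "M + i + length w \<le> s" and s: "\<forall>p < M + i + length w. x (s + p) = x p"
      using assms by blast
    then have "factor_at x (s + i) (length w) = factor_at x i (length w)"
      unfolding factor_at_def by (intro nth_equalityI) (simp_all add: add.assoc)
    then show "\<exists>j\<ge>M. j \<in> {j. factor_at x j (length w) = w}"
      using w \<open>M + i + length w \<le> s\<close> by (intro exI[of _ "s + i"]) simp
  qed
qed

lemma eventually_periodicE:
  assumes "eventually_periodic x"
  obtains N L where "0 < L" "\<And>n c. x (N + n + c * L) = x (N + n)"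
proof -
  obtain N u where "u \<noteq> []" and u: "\<forall>n. x (N + n) = u ! (n mod length u)"
    using assms unfolding eventually_periodic_def by blast
  then have "x (N + n + c * length u) = x (N + n)" for n c
    using u[rule_format, of "n + c * length u"] u[rule_format, of n] by (simp add: add.assoc)
  then show thesis
    using that[where N = N and L = "length u"] \<open>u \<noteq> []\<close> by simp
qed

definition blocks_meeting :: "nat \<Rightarrow> nat \<Rightarrow> nat set \<Rightarrow> nat set" where
  "blocks_meeting i m P = {j. \<exists>p\<in>P. i + j * m \<le> p \<and> p < i + j * m + m}"

lemma finite_blocks_meeting:
  assumes "1 \<le> m" "finite P"
  shows "finite (blocks_meeting i m P)"
proof -
  obtain b where b: "\<forall>p\<in>P. p \<le> b"
    using assms(2) finite_nat_set_iff_bounded_le by blast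
  have "j \<le> b" if j: "j \<in> blocks_meeting i m P" for j
  proof -
    obtain p where "p \<in> P" "i + j * m \<le> p"
      using j unfolding blocks_meeting_def by blast
    moreover have "j \<le> j * m" using assms(1) by simp
    ultimately show ?thesis using b[rule_format, OF \<open>p \<in> P\<close>] by linarith
  qed
  then show ?thesis
    by (meson finite_nat_set_iff_bounded_le)
qed

lemma card_blocks_meeting_interval:
  assumes "L \<le> m + 1"
  shows "card (blocks_meeting i m {a..<a + L}) \<le> 2"
proof (cases "blocks_meeting i m {a..<a + L} = {}")
  case True
  then show ?thesis by simp
next
  case False
  let ?J = "blocks_meeting i m {a..<a + L}"
  have "1 \<le> m"
    using False unfolding blocks_meeting_def by auto
  then have fin: "finite ?J"
    by (simp add: finite_blocks_meeting)
  define j0 where "j0 = Min ?J"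
  obtain p0 where p0: "a \<le> p0" "p0 < i + j0 * m + m"
    using Min_in[OF fin False] unfolding j0_def blocks_meeting_def by auto
  have "?J \<subseteq> {j0, Suc j0}"
  proof
    fix j
    assume j: "j \<in> ?J"
    then have "j0 \<le> j"
      using fin by (simp add: j0_def)
    obtain p where "p < a + L" "i + j * m \<le> p"
      using j unfolding blocks_meeting_def by auto
    then have "j * m < (j0 + 2) * m"
      using p0 assms by (simp add: algebra_simps)
    then have "j < j0 + 2"
      using mult_less_cancel2 by blast
    then show "j \<in> {j0, Suc j0}"
      using \<open>j0 \<le> j\<close> by auto
  qed
  then have "card ?J \<le> card {j0, Suc j0}"
    by (rule card_mono[rotated]) simp
  then show ?thesis by simp
qed

definition zero_one_digits :: "nat \<Rightarrow> nat \<Rightarrow> bool" where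
  "zero_one_digits B n \<longleftrightarrow> (\<forall>s. n div B ^ s mod B \<le> 1)"

lemma zero_one_digits_0 [simp]: "zero_one_digits B 0"
  unfolding zero_one_digits_def by simp

lemma zero_one_digits_iff:
  "zero_one_digits B n \<longleftrightarrow> n mod B \<le> 1 \<and> zero_one_digits B (n div B)"
proof -
  have "(\<forall>s. n div B ^ s mod B \<le> 1) \<longleftrightarrow>
        n div B ^ 0 mod B \<le> 1 \<and> (\<forall>s. n div B ^ Suc s mod B \<le> 1)"
    by (metis not0_implies_Suc)
  then show ?thesis
    unfolding zero_one_digits_def by (simp add: div_mult2_eq)
qed

lemma zero_one_digits_div_power:
  "zero_one_digits B n \<Longrightarrow> zero_one_digits B (n div B ^ t)"
  unfolding zero_one_digits_def by (metis div_mult2_eq power_add)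

lemma zero_one_digits_mod_power_less:
  assumes "2 \<le> B" "zero_one_digits B n"
  shows "n mod B ^ Suc t < 2 * B ^ t"
  using assms(2)
proof (induction t arbitrary: n)
  case 0
  then show ?case by (simp add: zero_one_digits_iff[of B n])
next
  case (Suc t)
  then have "n mod B \<le> 1" and "n div B mod B ^ Suc t < 2 * B ^ t"
    by (simp_all add: zero_one_digits_iff[of B n])
  then have "B * (n div B mod B ^ Suc t) + n mod B < B * (n div B mod B ^ Suc t + 1)"
    using assms(1) by simp
  also have "\<dots> \<le> B * (2 * B ^ t)"
    using \<open>n div B mod B ^ Suc t < 2 * B ^ t\<close> by (intro mult_le_mono2) simp
  finally have "B * (n div B mod B ^ Suc t) + n mod B < B * (2 * B ^ t)" .
  moreover have "n mod B ^ Suc (Suc t) = B * (n div B mod B ^ Suc t) + n mod B"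
    by (metis mod_mult2_eq power_Suc)
  ultimately show ?case by simp
qed

lemma zero_one_digits_power_add:
  assumes "2 \<le> B" "p < B ^ t"
  shows "zero_one_digits B (B ^ t + p) \<longleftrightarrow> zero_one_digits B p"
  using assms(2)
proof (induction t arbitrary: p)
  case 0
  then show ?case using assms(1) zero_one_digits_iff[of B 1] by simp
next
  case (Suc t)
  then have "p div B < B ^ t"
    by (simp add: less_mult_imp_div_less mult.commute)
  moreover have "(B ^ Suc t + p) div B = B ^ t + p div B" and "(B ^ Suc t + p) mod B = p mod B"
    using assms(1) by simp_all
  ultimately show ?case
    using Suc.IH by (metis zero_one_digits_iff)
qed

lemma zero_one_digits_power: "2 \<le> B \<Longrightarrow> zero_one_digits B (B ^ t)"
  using zero_one_digits_power_add[of B 0 t] by simp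

lemma zero_one_digits_close:
  assumes "2 \<le> B" "zero_one_digits B a" "zero_one_digits B b" "a \<le> b" "b + 1 < a + B"
  shows "b \<le> a + 1"
proof -
  have "a mod B \<le> 1" "b mod B \<le> 1"
    using assms(2,3) zero_one_digits_iff by blast+
  have "a div B = b div B"
  proof (rule ccontr)
    assume "a div B \<noteq> b div B"
    then have "a div B + 1 \<le> b div B"
      using div_le_mono[OF assms(4), of B] by simp
    then have "B * (a div B) + B \<le> B * (b div B)"
      using mult_le_mono2[of "a div B + 1" "b div B" B] by simp
    then show False
      using assms(5) \<open>a mod B \<le> 1\<close> mult_div_mod_eq[of B a] mult_div_mod_eq[of B b] by linarith
  qed
  then have "B * (a div B) = B * (b div B)"
    by simp
  then show ?thesis
    using \<open>a mod B \<le> 1\<close> \<open>b mod B \<le> 1\<close> mult_div_mod_eq[of B a] mult_div_mod_eq[of B b]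
    by linarith
qed

lemma zero_one_digits_div_power_close:
  assumes "2 \<le> B" "zero_one_digits B a" "zero_one_digits B b" "a \<le> b"
    and "b < a + (B - 2) * B ^ t"
  shows "b div B ^ t \<le> a div B ^ t + 1"
proof (rule zero_one_digits_close[OF assms(1)])
  let ?C = "B ^ t"
  have "0 < ?C" using assms(1) by simp
  then have "a < ?C * (a div ?C) + ?C"
    using mult_div_mod_eq[of ?C a] mod_less_divisor[of ?C a] by linarith
  then have "b < ?C * (a div ?C + 1 + (B - 2))"
    using assms(5) by (simp add: algebra_simps)
  then have "b div ?C < a div ?C + 1 + (B - 2)"
    by (simp add: less_mult_imp_div_less mult.commute)
  then show "b div ?C + 1 < a div ?C + B" using assms(1) by linarith
qed (use assms div_le_mono in \<open>simp_all add: zero_one_digits_div_power\<close>)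

lemma ex_power_bracket_double:
  fixes B m :: nat
  assumes "2 \<le> B" "1 \<le> m"
  obtains e where "2 * B ^ e \<le> m + 1" "m < 2 * B ^ (e + 1)"
proof -
  have "1 \<le> (m + 1) div 2"
    using assms(2) by presburger
  then obtain e where "B ^ e \<le> (m + 1) div 2" "(m + 1) div 2 < B ^ (e + 1)"
    using ex_power_ivl1[OF assms(1)] by blast
  moreover have "m + 1 \<le> 2 * ((m + 1) div 2) + 1" "2 * ((m + 1) div 2) \<le> m + 1"
    by presburger+
  ultimately show thesis
    using that[of e] by linarith
qed

lemma zero_one_digits_near_cluster:
  assumes "2 \<le> B" "zero_one_digits B a" "zero_one_digits B n" "a \<le> n"
    and "n < a + (B - 2) * B ^ (e + 1)"
  obtains g where "g \<in> {a div B ^ (e + 1), Suc (a div B ^ (e + 1))}"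
    and "n \<in> {g * B ^ (e + 1)..<g * B ^ (e + 1) + 2 * B ^ e}"
proof (rule that)
  let ?C = "B ^ (e + 1)"
  have "n div ?C \<le> a div ?C + 1"
    using assms by (intro zero_one_digits_div_power_close)
  moreover have "a div ?C \<le> n div ?C"
    using assms(4) by (rule div_le_mono)
  ultimately show "n div ?C \<in> {a div ?C, Suc (a div ?C)}"
    by auto
  have "n mod ?C < 2 * B ^ e"
    using zero_one_digits_mod_power_less[OF assms(1,3)] by simp
  then show "n \<in> {n div ?C * ?C..<n div ?C * ?C + 2 * B ^ e}"
    using div_mult_mod_eq[of n ?C] by (simp only: atLeastLessThan_iff) linarith
qed

lemma card_blocks_meeting_zero_one_digits:
  assumes B: "2 * k + 2 \<le> B" and m: "1 \<le> m"
  shows "card ({..<k} \<inter> blocks_meeting i m {n. zero_one_digits B n}) \<le> 4"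
    (is "card ?D \<le> 4")
proof (cases "?D = {}")
  case True
  then show ?thesis by simp
next
  case False
  then obtain j p where "i + j * m \<le> p" "zero_one_digits B p"
    unfolding blocks_meeting_def by auto
  then have "i \<le> p" by simp
  define n0 where "n0 = (LEAST n. i \<le> n \<and> zero_one_digits B n)"
  have n0: "i \<le> n0" "zero_one_digits B n0"
    using LeastI[of "\<lambda>n. i \<le> n \<and> zero_one_digits B n" p] \<open>i \<le> p\<close> \<open>zero_one_digits B p\<close>
    unfolding n0_def by auto
  have n0_least: "n0 \<le> n" if "i \<le> n" "zero_one_digits B n" for n
    using that unfolding n0_def by (simp add: Least_le)
  have "2 \<le> B" using B by simp
  obtain e where short: "2 * B ^ e \<le> m + 1" and "m < 2 * B ^ (e + 1)"
    using ex_power_bracket_double[OF \<open>2 \<le> B\<close> m] .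
  define C where "C = B ^ (e + 1)"
  define I where "I g = {g * C..<g * C + 2 * B ^ e}" for g
  define h where "h = n0 div C"
  have window: "n \<in> I h \<union> I (Suc h)" if n: "i \<le> n" "n < i + k * m" "zero_one_digits B n" for n
  proof -
    have "k * m \<le> k * (2 * C)"
      using \<open>m < 2 * B ^ (e + 1)\<close> unfolding C_def by simp
    also have "\<dots> = (2 * k) * C"
      by simp
    also have "\<dots> \<le> (B - 2) * C"
      using B by (intro mult_le_mono1) simp
    finally have "n < n0 + (B - 2) * C"
      using n n0 by linarith
    then obtain g where "g \<in> {h, Suc h}" "n \<in> I g"
      using zero_one_digits_near_cluster[OF \<open>2 \<le> B\<close> n0(2) n(3) n0_least[OF n(1,3)]]
      unfolding I_def h_def C_def by blast
    then show ?thesis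
      by auto
  qed
  have "?D \<subseteq> blocks_meeting i m (I h) \<union> blocks_meeting i m (I (Suc h))"
  proof
    fix j
    assume "j \<in> ?D"
    then obtain p where p: "j < k" "i + j * m \<le> p" "p < i + j * m + m" "zero_one_digits B p"
      unfolding blocks_meeting_def by auto
    have "j * m + m \<le> k * m"
      using mult_le_mono1[of "Suc j" k m] p(1) by simp
    then have "p \<in> I h \<union> I (Suc h)"
      using p by (intro window) auto
    then show "j \<in> blocks_meeting i m (I h) \<union> blocks_meeting i m (I (Suc h))"
      using p unfolding blocks_meeting_def by auto
  qed
  moreover have "finite (blocks_meeting i m (I g))" for g
    unfolding I_def using m by (simp add: finite_blocks_meeting)
  ultimately have "card ?D \<le> card (blocks_meeting i m (I h) \<union> blocks_meeting i m (I (Suc h)))"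
    by (intro card_mono) auto
  also have "\<dots> \<le> card (blocks_meeting i m (I h)) + card (blocks_meeting i m (I (Suc h)))"
    by (rule card_Un_le)
  also have "\<dots> \<le> 2 + 2"
    unfolding I_def using short by (intro add_mono card_blocks_meeting_interval)
  finally show ?thesis by simp
qed

lemma exponent_less_power:
  assumes "2 \<le> (B::nat)"
  shows "t < B ^ t"
proof -
  have "2 ^ t \<le> B ^ t"
    using assms by (simp add: power_mono)
  then show ?thesis
    using less_exp[of t] by linarith
qed

definition zero_one_word :: "nat \<Rightarrow> nat \<Rightarrow> nat" where
  "zero_one_word B n = of_bool (zero_one_digits B n)"

lemma recurrent_zero_one_word:
  assumes "2 \<le> B"
  shows "recurrent (zero_one_word B)"
proof (rule recurrentI)
  fix M
  have "\<forall>p<M. zero_one_word B (B ^ M + p) = zero_one_word B p"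
    using assms exponent_less_power[OF assms, of M]
    by (simp add: zero_one_word_def zero_one_digits_power_add)
  then show "\<exists>s\<ge>M. \<forall>p<M. zero_one_word B (s + p) = zero_one_word B p"
    using exponent_less_power[OF assms, of M] by (intro exI[of _ "B ^ M"]) simp
qed

lemma aperiodic_zero_one_word:
  assumes "3 \<le> B"
  shows "aperiodic (zero_one_word B)"
  unfolding aperiodic_def
proof
  assume "eventually_periodic (zero_one_word B)"
  then obtain N L where "0 < L" and periodic: "\<And>n c. zero_one_word B (N + n + c * L) = zero_one_word B (N + n)"
    by (elim eventually_periodicE) blast
  define t where "t = N + L"
  define a where "a = B ^ t"
  define c where "c = a div L + 1"
  have "t < a"
    unfolding a_def using assms by (simp add: exponent_less_power)
  have "a < c * L" "c * L \<le> a + L"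
    unfolding c_def distrib_right mult_1_left
    using div_mult_mod_eq[of a L] mod_less_divisor[OF \<open>0 < L\<close>, of a] by linarith+
  have "zero_one_word B (a + c * L) = zero_one_word B a"
    using periodic[of "a - N" c] \<open>t < a\<close> unfolding t_def by simp
  moreover have "zero_one_digits B a"
    unfolding a_def using assms by (simp add: zero_one_digits_power)
  moreover have "\<not> zero_one_digits B (a + c * L)"
  proof
    assume digits: "zero_one_digits B (a + c * L)"
    have "(a + c * L) mod (B * a) < 2 * a"
      using zero_one_digits_mod_power_less[OF _ digits, of t] assms unfolding a_def by simp
    moreover have "a + c * L < B * a"
      using \<open>c * L \<le> a + L\<close> \<open>t < a\<close> mult_le_mono1[OF assms, of a] unfolding t_def by linarith
    ultimately show False
      using \<open>a < c * L\<close> by simp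
  qed
  ultimately show False
    unfolding zero_one_word_def by simp
qed

lemma avoids_anti_powers_zero_one_word:
  assumes "2 * k + 2 \<le> B" "4 + lam < k"
  shows "avoids_anti_powers k lam (zero_one_word B)"
proof (rule avoids_anti_powersI[where c = 0 and r = 4])
  fix i m :: nat
  assume "1 \<le> m"
  have "factor_at (zero_one_word B) (i + j * m) m \<noteq> replicate m 0 \<longleftrightarrow>
        j \<in> blocks_meeting i m {n. zero_one_digits B n}" for j
    unfolding factor_at_eq_replicate_iff blocks_meeting_def zero_one_word_def by auto
  then have "{j. j < k \<and> factor_at (zero_one_word B) (i + j * m) m \<noteq> replicate m 0} =
             {..<k} \<inter> blocks_meeting i m {n. zero_one_digits B n}"
    by auto
  then show "card {j. j < k \<and> factor_at (zero_one_word B) (i + j * m) m \<noteq> replicate m 0} \<le> 4"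
    using card_blocks_meeting_zero_one_digits[OF assms(1) \<open>1 \<le> m\<close>] by simp
qed (use assms in simp)

theorem theorem4p6:
  fixes k :: nat
  assumes "k \<ge> 6"
  shows "\<exists>x :: nat \<Rightarrow> nat. finite (range x) \<and> aperiodic x \<and> recurrent x \<and>
           avoids_anti_powers k (k - 5) x"
proof (intro exI conjI)
  let ?x = "zero_one_word (2 * k + 2)"
  show "finite (range ?x)"
    by (rule finite_subset[of _ "{0, 1}"]) (auto simp: zero_one_word_def)
  show "aperiodic ?x"
    using assms by (intro aperiodic_zero_one_word) simp
  show "recurrent ?x"
    by (intro recurrent_zero_one_word) simp
  show "avoids_anti_powers k (k - 5) ?x"
    using assms by (intro avoids_anti_powers_zero_one_word) simp_all
qed

end
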